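(* Let $m\geq 0$ be an integer. Let the premiums $\{X_n, n\geq 1\}$ and the claims $\{Y_n, n\geq 1\}$ be sequences of nonnegative, identically distributed, $m$-dependent random variables with finite expectations, and let the rates of interest $\{I_n, n\geq 1\}$ be a sequence of i.i.d. nonnegative random variables with finite expectations. Suppose that the sequences $\{X_n\}$, $\{Y_n\}$, $\{I_n\}$ are mutually independent. For $u\geq 0$ define the surplus process by $U_0=u$ and $$U_n=(U_{n-1}+X_n)(1+I_n)-Y_n,\quad n\geq 1,$$ and the ultimate ruin probability $\Psi(u)=\mathbb{P}\big(\bigcup_{n=1}^\infty \{U_n<0\}\big)$. If there exists a positive real number $R$ satisfying $$\mathbb{E}\Big(e^{R\left(Y_1(1+I_1)^{-1}-X_1\right)}\Big)\leq 1,$$ then $$\Psi(u)\leq (m+1)e^{-R\frac{u}{m+1}}\quad\text{for all } u>\frac{(m+1)\ln(m+1)}{R}.$$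
   Context: A sequence of random variables $\{X_n, n\geq 1\}$ is called $m$-dependent (for a fixed nonnegative integer $m$) if the $\sigma$-algebras $\sigma\{X_1,\dots,X_n\}$ and $\sigma\{X_{n+k},X_{n+k+1},\dots\}$ are independent for all $k\geq m+1$ and all $n\geq 1$. In particular, $0$-dependence is independence. *)

theory Defs
  imports "HOL-Probability.Probability"
begin

definition gen_sigma :: "'a measure \<Rightarrow> (nat \<Rightarrow> 'a \<Rightarrow> real) \<Rightarrow> nat set \<Rightarrow> 'a set set" where
  "gen_sigma M X J = sigma_sets (space M) (\<Union>i\<in>J. {X i -` A \<inter> space M | A. A \<in> sets borel})"

definition m_dependent :: "'a measure \<Rightarrow> nat \<Rightarrow> (nat \<Rightarrow> 'a \<Rightarrow> real) \<Rightarrow> bool" where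
  "m_dependent M m X \<longleftrightarrow>
     (\<forall>n\<ge>1. \<forall>k\<ge>m+1. prob_space.indep_set M (gen_sigma M X {1..n}) (gen_sigma M X {n+k..}))"

definition ident_distr :: "'a measure \<Rightarrow> (nat \<Rightarrow> 'a \<Rightarrow> real) \<Rightarrow> bool" where
  "ident_distr M X \<longleftrightarrow> (\<forall>n\<ge>1. distr M borel (X n) = distr M borel (X 1))"

fun surplus :: "real \<Rightarrow> (nat \<Rightarrow> 'a \<Rightarrow> real) \<Rightarrow> (nat \<Rightarrow> 'a \<Rightarrow> real) \<Rightarrow> (nat \<Rightarrow> 'a \<Rightarrow> real) \<Rightarrow> nat \<Rightarrow> 'a \<Rightarrow> real" where
  "surplus u X Y I 0 \<omega> = u"
| "surplus u X Y I (Suc n) \<omega> =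
     (surplus u X Y I n \<omega> + X (Suc n) \<omega>) * (1 + I (Suc n) \<omega>) - Y (Suc n) \<omega>"

definition ruin_prob :: "'a measure \<Rightarrow> (nat \<Rightarrow> 'a \<Rightarrow> real) \<Rightarrow> (nat \<Rightarrow> 'a \<Rightarrow> real) \<Rightarrow> (nat \<Rightarrow> 'a \<Rightarrow> real) \<Rightarrow> real \<Rightarrow> real" where
  "ruin_prob M X Y I u = measure M (\<Union>n\<in>{1..}. {\<omega>\<in>space M. surplus u X Y I n \<omega> < 0})"

end

theory Submission
  imports Defs
begin

(* Write Z_n = Y_n / (1 + I_n) - X_n for the discounted net loss of year n and
   P_n = (1 + I_1) ... (1 + I_n). Then U_n = P_n (u - sum_{l <= n} Z_l / P_(l-1)), so ruin means
   that the discounted sums exceed u. Split these sums according to l mod (m + 1); on ruin some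
   class sum exceeds v = u / (m + 1). Inside one class consecutive indices are m + 1 apart, so the
   new term Z_k / P_(k-1) is independent of everything the class sum has seen so far
   (m-dependence of X and Y, independence of I), and because P_(k-1) >= 1, convexity of exp and
   the Lundberg condition give exponential moment at most 1 for it. Hence exp (R S) stopped at
   the first passage of the class sum S above v has expectation at most 1, Markov's inequality
   bounds the passage probability by exp (- R v), and a union bound over the m + 1 classes
   finishes the proof. *)

lemma exp_divide_le:
  fixes p t :: real
  assumes "p \<ge> 1"
  shows "exp (t / p) \<le> 1 - 1 / p + exp t / p"
proof -
  have "exp ((1 - 1 / p) *\<^sub>R 0 + (1 / p) *\<^sub>R t) \<le> (1 - 1 / p) * exp 0 + (1 / p) * exp t"
    by (rule convex_onD[OF exp_convex]) (use assms in auto)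
  then show ?thesis by simp
qed

lemma Int_stable_INT_Pi:
  assumes "\<And>i. i \<in> K \<Longrightarrow> Int_stable (C i)"
  shows "Int_stable ((\<lambda>c. \<Inter>i\<in>K. c i) ` Pi K C)"
proof (rule Int_stableI_image)
  fix c d assume "c \<in> Pi K C" "d \<in> Pi K C"
  then have "(\<lambda>i. c i \<inter> d i) \<in> Pi K C" using assms by (auto intro: Int_stableD)
  moreover have "(\<Inter>i\<in>K. c i) \<inter> (\<Inter>i\<in>K. d i) = (\<Inter>i\<in>K. c i \<inter> d i)" by auto
  ultimately show "\<exists>e\<in>Pi K C. (\<Inter>i\<in>K. c i) \<inter> (\<Inter>i\<in>K. d i) = (\<Inter>i\<in>K. e i)" by blast
qed

lemma UN_subset_INT_Pi:
  assumes "\<And>i. i \<in> K \<Longrightarrow> sigma_algebra \<Omega> (C i)"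
  shows "(\<Union>i\<in>K. C i) \<subseteq> (\<lambda>c. \<Inter>i\<in>K. c i) ` Pi K C"
proof
  fix a assume "a \<in> (\<Union>i\<in>K. C i)"
  then obtain j where j: "j \<in> K" "a \<in> C j" by blast
  let ?c = "\<lambda>i. if i = j then a else \<Omega>"
  have "a \<subseteq> \<Omega>" using assms[OF j(1)] j(2) by (auto simp: sigma_algebra_iff2)
  then have "a = (\<Inter>i\<in>K. ?c i)" using j by auto
  moreover have "\<Omega> \<in> C i" if "i \<in> K" for i
    using sigma_algebra.axioms(1)[OF assms[OF that]] by (rule algebra.top)
  then have "?c \<in> Pi K C" using j by auto
  ultimately show "a \<in> (\<lambda>c. \<Inter>i\<in>K. c i) ` Pi K C" by blast
qed

context prob_space
begin

lemma indep_set_mono: "indep_set A B \<Longrightarrow> A' \<subseteq> A \<Longrightarrow> B' \<subseteq> B \<Longrightarrow> indep_set A' B'"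
  unfolding indep_sets2_eq by blast

lemma indep_set_INT_Pi:
  assumes indep: "indep_sets F K" and K: "finite K" "K \<noteq> {}"
    and stable: "\<And>i. i \<in> K \<Longrightarrow> Int_stable (F i)"
    and sub: "\<And>i. i \<in> K \<Longrightarrow> A i \<subseteq> F i \<and> B i \<subseteq> F i"
    and AB: "\<And>i. i \<in> K \<Longrightarrow> indep_set (A i) (B i)"
  shows "indep_set ((\<lambda>c. \<Inter>i\<in>K. c i) ` Pi K A) ((\<lambda>c. \<Inter>i\<in>K. c i) ` Pi K B)"
proof (rule indep_setI)
  have "(\<Inter>i\<in>K. c i) \<in> events" if "c \<in> Pi K F" for c
    using indep that K by (intro sets.finite_INT) (auto simp: indep_sets_def)
  then show "(\<lambda>c. \<Inter>i\<in>K. c i) ` Pi K A \<subseteq> events" "(\<lambda>c. \<Inter>i\<in>K. c i) ` Pi K B \<subseteq> events"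
    using sub by fastforce+
next
  fix a b assume "a \<in> (\<lambda>c. \<Inter>i\<in>K. c i) ` Pi K A" "b \<in> (\<lambda>c. \<Inter>i\<in>K. c i) ` Pi K B"
  then obtain c d where a: "a = (\<Inter>i\<in>K. c i)" "c \<in> Pi K A" and b: "b = (\<Inter>i\<in>K. d i)" "d \<in> Pi K B"
    by blast
  have cd_F: "c i \<in> F i" "d i \<in> F i" if "i \<in> K" for i
    using a b sub[OF that] that by auto
  have "prob (a \<inter> b) = prob (\<Inter>i\<in>K. c i \<inter> d i)"
    using a b by (auto intro!: arg_cong[where f=prob])
  also have "\<dots> = (\<Prod>i\<in>K. prob (c i \<inter> d i))"
    using cd_F K by (intro indep_setsD[OF indep]) (auto intro!: Int_stableD[OF stable])
  also have "\<dots> = (\<Prod>i\<in>K. prob (c i) * prob (d i))"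
    using a b AB by (intro prod.cong) (auto intro: indep_setD)
  also have "\<dots> = prob a * prob b"
    using a b cd_F K by (simp add: prod.distrib indep_setsD[OF indep])
  finally show "prob (a \<inter> b) = prob a * prob b" .
qed

lemma indep_set_sigma_sets_UN:
  assumes indep: "indep_sets F K" and K: "finite K" "K \<noteq> {}"
    and sa: "\<And>i. i \<in> K \<Longrightarrow>
      sigma_algebra (space M) (F i) \<and> sigma_algebra (space M) (A i) \<and> sigma_algebra (space M) (B i)"
    and sub: "\<And>i. i \<in> K \<Longrightarrow> A i \<subseteq> F i \<and> B i \<subseteq> F i"
    and AB: "\<And>i. i \<in> K \<Longrightarrow> indep_set (A i) (B i)"
  shows "indep_set (sigma_sets (space M) (\<Union>i\<in>K. A i)) (sigma_sets (space M) (\<Union>i\<in>K. B i))"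
proof -
  have stable: "Int_stable (F i)" "Int_stable (A i)" "Int_stable (B i)" if "i \<in> K" for i
    using sa[OF that] by (auto intro: algebra.Int_stable sigma_algebra.axioms)
  have "indep_set (sigma_sets (space M) ((\<lambda>c. \<Inter>i\<in>K. c i) ` Pi K A))
      (sigma_sets (space M) ((\<lambda>c. \<Inter>i\<in>K. c i) ` Pi K B))"
    using stable by (intro indep_set_sigma_sets indep_set_INT_Pi[OF indep K] Int_stable_INT_Pi sub AB)
  then show ?thesis
    by (rule indep_set_mono; intro sigma_sets_subseteq UN_subset_INT_Pi) (use sa in blast)+
qed

lemma indep_set_commute: "indep_set A B \<Longrightarrow> indep_set B A"
  unfolding indep_sets2_eq by (metis Int_commute mult.commute)

lemma distr_pair_eq_if_indep_subalgebras:
  assumes indep: "indep_set (sets N1) (sets N2)"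
    and space: "space N1 = space M" "space N2 = space M"
    and f: "f \<in> measurable N1 S" and g: "g \<in> measurable N2 T"
  shows "random_variable S f" "random_variable T g"
    and "distr M (S \<Otimes>\<^sub>M T) (\<lambda>\<omega>. (f \<omega>, g \<omega>)) = distr M S f \<Otimes>\<^sub>M distr M T g"
proof -
  have f_sets: "f -` A \<inter> space M \<in> sets N1" if "A \<in> sets S" for A
    using measurable_sets[OF f that] space(1) by simp
  have g_sets: "g -` B \<inter> space M \<in> sets N2" if "B \<in> sets T" for B
    using measurable_sets[OF g that] space(2) by simp
  have N1: "sets N1 \<subseteq> events" and N2: "sets N2 \<subseteq> events"
    using indep by (auto dest: indep_setD_ev1 indep_setD_ev2)
  show f': "random_variable S f"
    using measurable_space[OF f] f_sets N1 by (intro measurableI) (auto simp: space)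
  show g': "random_variable T g"
    using measurable_space[OF g] g_sets N2 by (intro measurableI) (auto simp: space)
  interpret S: prob_space "distr M S f" by (rule prob_space_distr) fact
  interpret T: prob_space "distr M T g" by (rule prob_space_distr) fact
  interpret ST: pair_prob_space "distr M S f" "distr M T g" ..
  show "distr M (S \<Otimes>\<^sub>M T) (\<lambda>\<omega>. (f \<omega>, g \<omega>)) = distr M S f \<Otimes>\<^sub>M distr M T g"
  proof (rule pair_measure_eqI[symmetric])
    fix A B assume A: "A \<in> sets (distr M S f)" and B: "B \<in> sets (distr M T g)"
    have "(\<lambda>\<omega>. (f \<omega>, g \<omega>)) -` (A \<times> B) \<inter> space M = (f -` A \<inter> space M) \<inter> (g -` B \<inter> space M)"
      by auto
    moreover have "prob ((f -` A \<inter> space M) \<inter> (g -` B \<inter> space M)) = prob (f -` A \<inter> space M) * prob (g -` B \<inter> space M)"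
      using A B f_sets g_sets by (intro indep_setD[OF indep]) auto
    ultimately show "emeasure (distr M S f) A * emeasure (distr M T g) B
        = emeasure (distr M (S \<Otimes>\<^sub>M T) (\<lambda>\<omega>. (f \<omega>, g \<omega>))) (A \<times> B)"
      using A B f' g' by (simp add: emeasure_distr measurable_Pair emeasure_eq_measure ennreal_mult)
  qed (simp_all add: S.sigma_finite_measure_axioms T.sigma_finite_measure_axioms)
qed

lemma nn_integral_indep_le:
  assumes V: "random_variable S V" and U: "random_variable T U"
    and indep: "distr M (S \<Otimes>\<^sub>M T) (\<lambda>\<omega>. (V \<omega>, U \<omega>)) = distr M S V \<Otimes>\<^sub>M distr M T U"
    and F: "F \<in> borel_measurable (S \<Otimes>\<^sub>M T)" and \<phi>: "\<phi> \<in> borel_measurable S"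
    and bound: "\<And>s. s \<in> space S \<Longrightarrow> (\<integral>\<^sup>+\<omega>. F (s, U \<omega>) \<partial>M) \<le> \<phi> s"
  shows "(\<integral>\<^sup>+\<omega>. F (V \<omega>, U \<omega>) \<partial>M) \<le> (\<integral>\<^sup>+\<omega>. \<phi> (V \<omega>) \<partial>M)"
proof -
  interpret PV: prob_space "distr M S V" by (rule prob_space_distr) fact
  interpret PU: prob_space "distr M T U" by (rule prob_space_distr) fact
  have "(\<integral>\<^sup>+\<omega>. F (V \<omega>, U \<omega>) \<partial>M) = (\<integral>\<^sup>+x. F x \<partial>(distr M S V \<Otimes>\<^sub>M distr M T U))"
    unfolding indep[symmetric] using V U F by (subst nn_integral_distr) (auto intro: measurable_Pair)
  also have "\<dots> = (\<integral>\<^sup>+s. \<integral>\<^sup>+t. F (s, t) \<partial>distr M T U \<partial>distr M S V)"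
    using F by (intro PU.nn_integral_fst[symmetric]) simp
  also have "\<dots> \<le> (\<integral>\<^sup>+s. \<phi> s \<partial>distr M S V)"
  proof (rule nn_integral_mono)
    fix s assume "s \<in> space (distr M S V)"
    then have s: "s \<in> space S" by simp
    have "(\<integral>\<^sup>+t. F (s, t) \<partial>distr M T U) = (\<integral>\<^sup>+\<omega>. F (s, U \<omega>) \<partial>M)"
      using U by (subst nn_integral_distr) (auto intro: measurable_compose_Pair1[OF s F])
    then show "(\<integral>\<^sup>+t. F (s, t) \<partial>distr M T U) \<le> \<phi> s" using bound[OF s] by simp
  qed
  also have "\<dots> = (\<integral>\<^sup>+\<omega>. \<phi> (V \<omega>) \<partial>M)"
    using V \<phi> by (subst nn_integral_distr) auto
  finally show ?thesis .
qed

lemma sigma_algebra_gen_sigma: "sigma_algebra (space M) (gen_sigma M Z J)"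
  unfolding gen_sigma_def by (rule sigma_algebra_sigma_sets) auto

lemma gen_sigma_mono: "J \<subseteq> J' \<Longrightarrow> gen_sigma M Z J \<subseteq> gen_sigma M Z J'"
  unfolding gen_sigma_def by (rule sigma_sets_subseteq) auto

lemma gen_sigma_subset_Pow: "gen_sigma M Z J \<subseteq> Pow (space M)"
  using sigma_algebra_gen_sigma by (auto simp: sigma_algebra_iff2)

lemma gen_sigma_subset_events:
  "(\<And>i. i \<in> J \<Longrightarrow> Z i \<in> borel_measurable M) \<Longrightarrow> gen_sigma M Z J \<subseteq> events"
  unfolding gen_sigma_def by (rule sets.sigma_sets_subset) auto

lemma measurable_sigma_gen_sigma:
  assumes "i \<in> J" "gen_sigma M Z J \<subseteq> G" "G \<subseteq> Pow (space M)"
  shows "Z i \<in> borel_measurable (sigma (space M) G)"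
proof (rule measurableI)
  fix A :: "real set" assume "A \<in> sets borel"
  then have "Z i -` A \<inter> space M \<in> gen_sigma M Z J"
    using assms(1) unfolding gen_sigma_def by (intro sigma_sets.Basic) auto
  then show "Z i -` A \<inter> space (sigma (space M) G) \<in> sets (sigma (space M) G)"
    using assms(2,3) by auto
qed simp

lemma indep_set_gen_sigma_empty: "B \<subseteq> events \<Longrightarrow> indep_set (gen_sigma M Z {}) B"
  unfolding gen_sigma_def indep_sets2_eq
  by (auto simp: sigma_sets_empty_eq prob_space Int_absorb1 dest: sets.sets_into_space)

lemma m_dependent_indep_set:
  assumes mdep: "m_dependent M m Z" and rv: "\<And>n. n \<ge> 1 \<Longrightarrow> Z n \<in> borel_measurable M"
    and n: "n \<ge> 1"
  shows "indep_set (gen_sigma M Z {1..n - Suc m}) (gen_sigma M Z {n})"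
proof (cases "n - Suc m \<ge> 1")
  case True
  have "indep_set (gen_sigma M Z {1..n - Suc m}) (gen_sigma M Z {n - Suc m + Suc m..})"
    using mdep[unfolded m_dependent_def, rule_format, of "n - Suc m" "Suc m"] True by simp
  moreover have "n - Suc m + Suc m = n" using True by simp
  ultimately have "indep_set (gen_sigma M Z {1..n - Suc m}) (gen_sigma M Z {n..})" by simp
  then show ?thesis by (rule indep_set_mono) (simp_all add: gen_sigma_mono)
next
  case False
  then have "{1..n - Suc m} = {}" by simp
  moreover have "gen_sigma M Z {n} \<subseteq> events"
    using rv n by (intro gen_sigma_subset_events) simp
  ultimately show ?thesis by (simp add: indep_set_gen_sigma_empty)
qed

lemma indep_vars_indep_set_gen_sigma:
  assumes indep: "indep_vars (\<lambda>_. borel) Z S" and JK: "J \<subseteq> S" "K \<subseteq> S" "J \<inter> K = {}"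
  shows "indep_set (gen_sigma M Z J) (gen_sigma M Z K)"
proof -
  let ?G = "\<lambda>i. {Z i -` A \<inter> space M | A. A \<in> sets borel}"
  let ?index = "\<lambda>b. if b then J else K"
  have "indep_sets (\<lambda>b. sigma_sets (space M) (\<Union>i\<in>?index b. ?G i)) UNIV"
  proof (rule indep_sets_collect_sigma)
    show "indep_sets ?G (\<Union>b. ?index b)"
      using indep JK unfolding indep_vars_def2 by (auto intro: indep_sets_mono_index)
    show "Int_stable (?G i)" for i
    proof (rule Int_stableI)
      fix a b assume "a \<in> ?G i" "b \<in> ?G i"
      then obtain A B where "a = Z i -` A \<inter> space M" "b = Z i -` B \<inter> space M" "A \<in> sets borel" "B \<in> sets borel"
        by blast
      then show "a \<inter> b \<in> ?G i" by (intro CollectI exI[of _ "A \<inter> B"]) auto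
    qed
    show "disjoint_family_on ?index UNIV"
      using JK unfolding disjoint_family_on_def by auto
  qed
  then show ?thesis
    unfolding indep_set_def gen_sigma_def by (rule indep_sets_cong[THEN iffD1, rotated 2]) (auto split: bool.split)
qed

end

locale risk_model = prob_space M for M :: "'a measure" +
  fixes m :: nat and X Y I :: "nat \<Rightarrow> 'a \<Rightarrow> real"
  assumes X_rv: "\<And>n. n \<ge> 1 \<Longrightarrow> X n \<in> borel_measurable M"
    and Y_rv: "\<And>n. n \<ge> 1 \<Longrightarrow> Y n \<in> borel_measurable M"
    and I_rv: "\<And>n. n \<ge> 1 \<Longrightarrow> I n \<in> borel_measurable M"
    and I_nonneg: "\<And>n \<omega>. n \<ge> 1 \<Longrightarrow> \<omega> \<in> space M \<Longrightarrow> I n \<omega> \<ge> 0"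
    and X_id: "ident_distr M X"
    and Y_id: "ident_distr M Y"
    and I_id: "ident_distr M I"
    and X_mdep: "m_dependent M m X"
    and Y_mdep: "m_dependent M m Y"
    and I_indep: "indep_vars (\<lambda>_. borel) I {1..}"
    and XYI_indep: "indep_sets
          (\<lambda>j::nat. if j = 0 then gen_sigma M X {1..}
                     else if j = 1 then gen_sigma M Y {1..}
                     else gen_sigma M I {1..}) {0, 1, 2}"
begin

definition sigma_XYI :: "nat set \<Rightarrow> nat set \<Rightarrow> nat set \<Rightarrow> 'a measure" where
  "sigma_XYI JX JY JI = sigma (space M) (gen_sigma M X JX \<union> gen_sigma M Y JY \<union> gen_sigma M I JI)"

lemma space_sigma_XYI [simp]: "space (sigma_XYI JX JY JI) = space M"
  unfolding sigma_XYI_def by (simp add: space_measure_of_conv)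

lemma measurable_sigma_XYI:
  shows measurable_X_sigma_XYI: "l \<in> JX \<Longrightarrow> X l \<in> borel_measurable (sigma_XYI JX JY JI)"
    and measurable_Y_sigma_XYI: "l \<in> JY \<Longrightarrow> Y l \<in> borel_measurable (sigma_XYI JX JY JI)"
    and measurable_I_sigma_XYI: "l \<in> JI \<Longrightarrow> I l \<in> borel_measurable (sigma_XYI JX JY JI)"
  unfolding sigma_XYI_def using gen_sigma_subset_Pow
  by (auto intro!: measurable_sigma_gen_sigma)

lemma indep_set_sigma_XYI:
  assumes "JX \<union> JY \<union> JI \<union> JX' \<union> JY' \<union> JI' \<subseteq> {1..}"
    and "indep_set (gen_sigma M X JX) (gen_sigma M X JX')"
    and "indep_set (gen_sigma M Y JY) (gen_sigma M Y JY')"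
    and "indep_set (gen_sigma M I JI) (gen_sigma M I JI')"
  shows "indep_set (sets (sigma_XYI JX JY JI)) (sets (sigma_XYI JX' JY' JI'))"
proof -
  let ?G = "\<lambda>JX JY JI j::nat. if j = 0 then gen_sigma M X JX else if j = 1 then gen_sigma M Y JY else gen_sigma M I JI"
  have "indep_set (sigma_sets (space M) (\<Union>j\<in>{0,1,2}. ?G JX JY JI j))
      (sigma_sets (space M) (\<Union>j\<in>{0,1,2}. ?G JX' JY' JI' j))"
    using assms
    by (intro indep_set_sigma_sets_UN[OF XYI_indep]) (auto simp: sigma_algebra_gen_sigma intro!: gen_sigma_mono)
  then show ?thesis
    unfolding sigma_XYI_def using gen_sigma_subset_Pow by (simp add: Un_ac)
qed

lemma distr_XYI_eq_product:
  assumes j: "j \<ge> 1"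
  shows "distr M (borel \<Otimes>\<^sub>M (borel \<Otimes>\<^sub>M borel)) (\<lambda>\<omega>. (X j \<omega>, Y j \<omega>, I j \<omega>))
      = distr M borel (X 1) \<Otimes>\<^sub>M (distr M borel (Y 1) \<Otimes>\<^sub>M distr M borel (I 1))"
proof -
  have events: "gen_sigma M X {j} \<subseteq> events" "gen_sigma M Y {j} \<subseteq> events" "gen_sigma M I {j} \<subseteq> events"
    "gen_sigma M X {} \<subseteq> events"
    using j X_rv Y_rv I_rv by (auto intro!: gen_sigma_subset_events)
  have indep_X_YI: "indep_set (sets (sigma_XYI {j} {} {})) (sets (sigma_XYI {} {j} {j}))"
  proof (rule indep_set_sigma_XYI)
    show "indep_set (gen_sigma M X {j}) (gen_sigma M X {})"
      using events(1) by (rule indep_set_commute[OF indep_set_gen_sigma_empty])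
  qed (use j events in \<open>simp_all add: indep_set_gen_sigma_empty\<close>)
  have indep_Y_I: "indep_set (sets (sigma_XYI {} {j} {})) (sets (sigma_XYI {} {} {j}))"
  proof (rule indep_set_sigma_XYI)
    show "indep_set (gen_sigma M Y {j}) (gen_sigma M Y {})"
      using events(2) by (rule indep_set_commute[OF indep_set_gen_sigma_empty])
  qed (use j events in \<open>simp_all add: indep_set_gen_sigma_empty\<close>)
  have YI: "(\<lambda>\<omega>. (Y j \<omega>, I j \<omega>)) \<in> measurable (sigma_XYI {} {j} {j}) (borel \<Otimes>\<^sub>M borel)"
    by (intro measurable_Pair measurable_sigma_XYI) auto
  have "distr M (borel \<Otimes>\<^sub>M (borel \<Otimes>\<^sub>M borel)) (\<lambda>\<omega>. (X j \<omega>, Y j \<omega>, I j \<omega>))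
      = distr M borel (X j) \<Otimes>\<^sub>M distr M (borel \<Otimes>\<^sub>M borel) (\<lambda>\<omega>. (Y j \<omega>, I j \<omega>))"
    using distr_pair_eq_if_indep_subalgebras(3)[OF indep_X_YI _ _ measurable_X_sigma_XYI YI] by simp
  moreover have "distr M (borel \<Otimes>\<^sub>M borel) (\<lambda>\<omega>. (Y j \<omega>, I j \<omega>)) = distr M borel (Y j) \<Otimes>\<^sub>M distr M borel (I j)"
    using distr_pair_eq_if_indep_subalgebras(3)[OF indep_Y_I _ _ measurable_Y_sigma_XYI measurable_I_sigma_XYI]
    by simp
  moreover have "distr M borel (X j) = distr M borel (X 1)" "distr M borel (Y j) = distr M borel (Y 1)"
    "distr M borel (I j) = distr M borel (I 1)"
    using j X_id Y_id I_id unfolding ident_distr_def by blast+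
  ultimately show ?thesis by simp
qed

lemma distr_XYI_eq:
  "k \<ge> 1 \<Longrightarrow> distr M (borel \<Otimes>\<^sub>M (borel \<Otimes>\<^sub>M borel)) (\<lambda>\<omega>. (X k \<omega>, Y k \<omega>, I k \<omega>))
       = distr M (borel \<Otimes>\<^sub>M (borel \<Otimes>\<^sub>M borel)) (\<lambda>\<omega>. (X 1 \<omega>, Y 1 \<omega>, I 1 \<omega>))"
  using distr_XYI_eq_product[of k] distr_XYI_eq_product[of 1] by simp

(* Everything observed before year k that is independent of year k: by m-dependence the
   premiums and claims only up to year k - m - 1, the interest rates up to year k - 1. *)
definition info_before :: "nat \<Rightarrow> 'a measure" where
  "info_before k = sigma_XYI {1..k - Suc m} {1..k - Suc m} {1..k - 1}"

lemma indep_set_info_before: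
  assumes "k \<ge> 1"
  shows "indep_set (sets (info_before k)) (sets (sigma_XYI {k} {k} {k}))"
  unfolding info_before_def using assms
  by (intro indep_set_sigma_XYI m_dependent_indep_set[OF X_mdep X_rv] m_dependent_indep_set[OF Y_mdep Y_rv]
      indep_vars_indep_set_gen_sigma[OF I_indep]) auto

definition growth :: "nat \<Rightarrow> 'a \<Rightarrow> real" where
  "growth n \<omega> = (\<Prod>l=1..n. 1 + I l \<omega>)"

definition net_loss :: "nat \<Rightarrow> 'a \<Rightarrow> real" where
  "net_loss n \<omega> = Y n \<omega> / (1 + I n \<omega>) - X n \<omega>"

definition class_sum :: "nat \<Rightarrow> nat \<Rightarrow> 'a \<Rightarrow> real" where
  "class_sum r n \<omega> = (\<Sum>l=1..n. if l mod Suc m = r then net_loss l \<omega> / growth (l - 1) \<omega> else 0)"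

lemma growth_ge_1: "\<omega> \<in> space M \<Longrightarrow> growth n \<omega> \<ge> 1"
  unfolding growth_def by (rule prod_ge_1) (auto intro: I_nonneg)

lemma growth_Suc: "growth (Suc n) \<omega> = growth n \<omega> * (1 + I (Suc n) \<omega>)"
  unfolding growth_def by simp

lemma class_sum_0 [simp]: "class_sum r 0 \<omega> = 0"
  unfolding class_sum_def by simp

lemma class_sum_Suc:
  "class_sum r (Suc n) \<omega> =
     class_sum r n \<omega> + (if Suc n mod Suc m = r then net_loss (Suc n) \<omega> / growth n \<omega> else 0)"
  unfolding class_sum_def by simp

lemma surplus_eq:
  assumes "\<omega> \<in> space M"
  shows "surplus u X Y I n \<omega> = growth n \<omega> * (u - (\<Sum>l=1..n. net_loss l \<omega> / growth (l - 1) \<omega>))"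
proof (induction n)
  case (Suc n)
  let ?S = "\<Sum>l=1..n. net_loss l \<omega> / growth (l - 1) \<omega>"
  have "1 + I (Suc n) \<omega> > 0" "growth n \<omega> > 0"
    using I_nonneg[of "Suc n" \<omega>] growth_ge_1[of \<omega> n] assms by auto
  moreover have "(a * (s - S) + x) * J - y = a * J * (s - (S + (y / J - x) / a))"
    if "a \<noteq> 0" "J \<noteq> 0" for a s S x y J :: real
    using that by (simp add: field_simps)
  ultimately have "(growth n \<omega> * (u - ?S) + X (Suc n) \<omega>) * (1 + I (Suc n) \<omega>) - Y (Suc n) \<omega>
      = growth (Suc n) \<omega> * (u - (?S + net_loss (Suc n) \<omega> / growth n \<omega>))"
    unfolding growth_Suc net_loss_def by simp
  then show ?case using Suc by simp
qed (simp add: growth_def)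

lemma sum_eq_sum_class_sum:
  "(\<Sum>l=1..n. net_loss l \<omega> / growth (l - 1) \<omega>) = (\<Sum>r<Suc m. class_sum r n \<omega>)"
  unfolding class_sum_def by (subst sum.swap) (simp del: sum.lessThan_Suc)

lemma measurable_growth_class_sum:
  assumes I: "\<And>l. l \<in> {1..n} \<Longrightarrow> I l \<in> borel_measurable N"
    and XY: "\<And>l. l \<in> {1..n} \<Longrightarrow> l mod Suc m = r \<Longrightarrow> X l \<in> borel_measurable N \<and> Y l \<in> borel_measurable N"
    and "j \<le> n"
  shows "growth j \<in> borel_measurable N" "class_sum r j \<in> borel_measurable N"
proof -
  have growth: "growth i \<in> borel_measurable N" if "i \<le> n" for i
    unfolding growth_def using I that by (intro borel_measurable_prod borel_measurable_add) auto
  then show "growth j \<in> borel_measurable N" using \<open>j \<le> n\<close> .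
  have "(\<lambda>\<omega>. if l mod Suc m = r then net_loss l \<omega> / growth (l - 1) \<omega> else 0) \<in> borel_measurable N"
    if "l \<in> {1..n}" for l
  proof (cases "l mod Suc m = r")
    case True
    have [measurable]: "X l \<in> borel_measurable N" "Y l \<in> borel_measurable N" "I l \<in> borel_measurable N"
      "growth (l - 1) \<in> borel_measurable N"
      using XY[OF that True] I[OF that] growth that by auto
    show ?thesis unfolding net_loss_def by measurable
  qed simp
  then show "class_sum r j \<in> borel_measurable N"
    unfolding class_sum_def using \<open>j \<le> n\<close> by (intro borel_measurable_sum) auto
qed

lemma measurable_info_before:
  assumes "j < k"
  shows "growth j \<in> borel_measurable (info_before k)"
    and "class_sum (k mod Suc m) j \<in> borel_measurable (info_before k)"
proof -
  have same_class: "l \<le> k - Suc m" if "1 \<le> l" "l < k" "l mod Suc m = k mod Suc m" for l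
  proof -
    have "Suc m dvd k - l" using that mod_eq_dvd_iff_nat[of l k "Suc m"] by simp
    then have "Suc m \<le> k - l" using that by (intro dvd_imp_le) auto
    then show ?thesis by simp
  qed
  have I: "I l \<in> borel_measurable (info_before k)" if "l \<in> {1..k - 1}" for l
    unfolding info_before_def using that by (rule measurable_I_sigma_XYI)
  have XY: "X l \<in> borel_measurable (info_before k) \<and> Y l \<in> borel_measurable (info_before k)"
    if "l \<in> {1..k - 1}" "l mod Suc m = k mod Suc m" for l
    unfolding info_before_def using that same_class[of l]
    by (auto intro!: measurable_X_sigma_XYI measurable_Y_sigma_XYI)
  from assms have "j \<le> k - 1" by simp
  then show "growth j \<in> borel_measurable (info_before k)"
    and "class_sum (k mod Suc m) j \<in> borel_measurable (info_before k)"
    using measurable_growth_class_sum[where n="k - 1" and N="info_before k" and r="k mod Suc m"] I XY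
    by blast+
qed

lemma measurable_growth_class_sum_M:
  "growth n \<in> borel_measurable M" "class_sum r n \<in> borel_measurable M"
  using measurable_growth_class_sum[of n M r n] X_rv Y_rv I_rv by auto

definition not_crossed :: "nat \<Rightarrow> real \<Rightarrow> nat \<Rightarrow> 'a \<Rightarrow> bool" where
  "not_crossed r v n \<omega> \<longleftrightarrow> (\<forall>j\<le>n. class_sum r j \<omega> \<le> v)"

lemma not_crossed_Suc: "not_crossed r v (Suc n) \<omega> \<longleftrightarrow> not_crossed r v n \<omega> \<and> class_sum r (Suc n) \<omega> \<le> v"
  unfolding not_crossed_def by (auto simp: le_Suc_eq)

lemma pred_not_crossed:
  "(\<And>j. j \<le> n \<Longrightarrow> class_sum r j \<in> borel_measurable N) \<Longrightarrow> Measurable.pred N (not_crossed r v n)"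
  unfolding not_crossed_def by measurable

end

locale lundberg_model = risk_model +
  fixes R :: real
  assumes R_pos: "R > 0"
    and R_lund: "(\<integral>\<^sup>+ \<omega>. ennreal (exp (R * (Y 1 \<omega> / (1 + I 1 \<omega>) - X 1 \<omega>))) \<partial>M) \<le> 1"
begin

lemma nn_integral_exp_net_loss_le:
  assumes k: "k \<ge> 1" and p: "p \<ge> 1"
  shows "(\<integral>\<^sup>+\<omega>. ennreal (exp (R * net_loss k \<omega> / p)) \<partial>M) \<le> 1"
proof -
  let ?f = "\<lambda>(x, y, i). ennreal (exp (R * (y / (1 + i) - x) / p))"
  have [measurable]: "?f \<in> borel_measurable (borel \<Otimes>\<^sub>M (borel \<Otimes>\<^sub>M borel))" by measurable
  have XYI: "(\<lambda>\<omega>. (X j \<omega>, Y j \<omega>, I j \<omega>)) \<in> measurable M (borel \<Otimes>\<^sub>M (borel \<Otimes>\<^sub>M borel))" if "j \<ge> 1" for j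
    using that X_rv Y_rv I_rv by (auto intro!: measurable_Pair)
  have "(\<integral>\<^sup>+\<omega>. ennreal (exp (R * net_loss k \<omega> / p)) \<partial>M)
      = (\<integral>\<^sup>+t. ?f t \<partial>distr M (borel \<Otimes>\<^sub>M (borel \<Otimes>\<^sub>M borel)) (\<lambda>\<omega>. (X k \<omega>, Y k \<omega>, I k \<omega>)))"
    using XYI[OF k] by (simp add: nn_integral_distr net_loss_def)
  also have "\<dots> = (\<integral>\<^sup>+\<omega>. ennreal (exp (R * (Y 1 \<omega> / (1 + I 1 \<omega>) - X 1 \<omega>) / p)) \<partial>M)"
    using XYI[of 1] by (simp add: distr_XYI_eq[OF k] nn_integral_distr)
  also have "\<dots> \<le> (\<integral>\<^sup>+\<omega>. ennreal (1 - 1 / p) + ennreal (1 / p) * ennreal (exp (R * (Y 1 \<omega> / (1 + I 1 \<omega>) - X 1 \<omega>))) \<partial>M)"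
    using p exp_divide_le[OF p]
    by (intro nn_integral_mono) (simp add: ennreal_mult[symmetric] ennreal_plus[symmetric] del: ennreal_plus)
  also have "\<dots> = ennreal (1 - 1 / p) + ennreal (1 / p) * (\<integral>\<^sup>+\<omega>. ennreal (exp (R * (Y 1 \<omega> / (1 + I 1 \<omega>) - X 1 \<omega>))) \<partial>M)"
    using X_rv[of 1] Y_rv[of 1] I_rv[of 1]
    by (subst nn_integral_add) (auto simp: nn_integral_cmult emeasure_space_1)
  also have "\<dots> \<le> ennreal (1 - 1 / p) + ennreal (1 / p) * 1"
    by (intro add_mono mult_left_mono R_lund) auto
  also have "\<dots> = 1"
    using p by (simp add: ennreal_plus[symmetric] del: ennreal_plus)
  finally show ?thesis .
qed

lemma nn_integral_mult_exp_net_loss_le: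
  assumes "k \<ge> 1"
  shows "(\<integral>\<^sup>+\<omega>. ennreal (w * exp (R * net_loss k \<omega> / max 1 p)) \<partial>M) \<le> ennreal w"
proof (cases "w \<le> 0")
  case True
  then show ?thesis by (simp add: ennreal_neg mult_nonpos_nonneg)
next
  case False
  have [measurable]: "X k \<in> borel_measurable M" "Y k \<in> borel_measurable M" "I k \<in> borel_measurable M"
    using assms X_rv Y_rv I_rv by auto
  have "(\<integral>\<^sup>+\<omega>. ennreal (w * exp (R * net_loss k \<omega> / max 1 p)) \<partial>M)
      = ennreal w * (\<integral>\<^sup>+\<omega>. ennreal (exp (R * net_loss k \<omega> / max 1 p)) \<partial>M)"
    unfolding net_loss_def using False by (subst nn_integral_cmult[symmetric]) (auto simp: ennreal_mult)
  also have "\<dots> \<le> ennreal w"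
    using mult_left_mono[OF nn_integral_exp_net_loss_le[OF assms, of "max 1 p"]] by simp
  finally show ?thesis .
qed

lemma nn_integral_exp_net_loss_info_before_le:
  assumes k: "k \<ge> 1"
    and W: "W \<in> borel_measurable (info_before k)" and P: "P \<in> borel_measurable (info_before k)"
    and P_ge: "\<And>\<omega>. \<omega> \<in> space M \<Longrightarrow> P \<omega> \<ge> 1"
  shows "(\<integral>\<^sup>+\<omega>. ennreal (W \<omega> * exp (R * net_loss k \<omega> / P \<omega>)) \<partial>M) \<le> (\<integral>\<^sup>+\<omega>. ennreal (W \<omega>) \<partial>M)"
proof -
  define F :: "(real \<times> real) \<times> (real \<times> real \<times> real) \<Rightarrow> ennreal" where
    "F = (\<lambda>((w, p), (x, y, i)). ennreal (w * exp (R * (y / (1 + i) - x) / max 1 p)))"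
  have [measurable]: "F \<in> borel_measurable ((borel \<Otimes>\<^sub>M borel) \<Otimes>\<^sub>M (borel \<Otimes>\<^sub>M (borel \<Otimes>\<^sub>M borel)))"
    unfolding F_def case_prod_beta by measurable
  let ?V = "\<lambda>\<omega>. (W \<omega>, P \<omega>)" and ?U = "\<lambda>\<omega>. (X k \<omega>, Y k \<omega>, I k \<omega>)"
  have "?V \<in> measurable (info_before k) (borel \<Otimes>\<^sub>M borel)"
    using W P by measurable
  moreover have "?U \<in> measurable (sigma_XYI {k} {k} {k}) (borel \<Otimes>\<^sub>M (borel \<Otimes>\<^sub>M borel))"
    by (intro measurable_Pair measurable_sigma_XYI) auto
  moreover have "space (info_before k) = space M" by (simp add: info_before_def)
  ultimately have V: "random_variable (borel \<Otimes>\<^sub>M borel) ?V"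
    and U: "random_variable (borel \<Otimes>\<^sub>M (borel \<Otimes>\<^sub>M borel)) ?U"
    and indep: "distr M ((borel \<Otimes>\<^sub>M borel) \<Otimes>\<^sub>M (borel \<Otimes>\<^sub>M (borel \<Otimes>\<^sub>M borel))) (\<lambda>\<omega>. (?V \<omega>, ?U \<omega>))
      = distr M (borel \<Otimes>\<^sub>M borel) ?V \<Otimes>\<^sub>M distr M (borel \<Otimes>\<^sub>M (borel \<Otimes>\<^sub>M borel)) ?U"
    using distr_pair_eq_if_indep_subalgebras[OF indep_set_info_before[OF k]] by auto
  have "(\<integral>\<^sup>+\<omega>. F (s, ?U \<omega>) \<partial>M) \<le> ennreal (fst s)" for s
    using nn_integral_mult_exp_net_loss_le[OF k, of "fst s" "snd s"]
    by (simp add: F_def net_loss_def case_prod_beta)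
  then have "(\<integral>\<^sup>+\<omega>. F (?V \<omega>, ?U \<omega>) \<partial>M) \<le> (\<integral>\<^sup>+\<omega>. ennreal (fst (?V \<omega>)) \<partial>M)"
    by (intro nn_integral_indep_le[OF V U indep]) auto
  moreover have "F (?V \<omega>, ?U \<omega>) = ennreal (W \<omega> * exp (R * net_loss k \<omega> / P \<omega>))" if "\<omega> \<in> space M" for \<omega>
    using P_ge[OF that] by (simp add: F_def net_loss_def)
  ultimately show ?thesis by (simp cong: nn_integral_cong)
qed

(* exp (R * class_sum r (min n \<tau>)), where \<tau> is the first time the class sum exceeds v *)
primrec stopped_exp :: "nat \<Rightarrow> real \<Rightarrow> nat \<Rightarrow> 'a \<Rightarrow> real" where
  "stopped_exp r v 0 \<omega> = 1"
| "stopped_exp r v (Suc n) \<omega> =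
     (if not_crossed r v n \<omega> then exp (R * class_sum r (Suc n) \<omega>) else stopped_exp r v n \<omega>)"

lemma stopped_exp_pos: "stopped_exp r v n \<omega> > 0"
  by (induction n) auto

lemma stopped_exp_not_crossed: "not_crossed r v n \<omega> \<Longrightarrow> stopped_exp r v n \<omega> = exp (R * class_sum r n \<omega>)"
  by (cases n) (auto simp: not_crossed_Suc)

lemma stopped_exp_crossed: "\<not> not_crossed r v n \<omega> \<Longrightarrow> exp (R * v) \<le> stopped_exp r v n \<omega>"
proof (induction n)
  case 0
  then have "R * v < 0" using R_pos by (simp add: not_crossed_def mult_pos_neg)
  then show ?case by simp
next
  case (Suc n)
  then show ?case using R_pos by (auto simp: not_crossed_Suc)
qed

lemma measurable_stopped_exp:
  "(\<And>j. j \<le> n \<Longrightarrow> class_sum r j \<in> borel_measurable N) \<Longrightarrow> stopped_exp r v n \<in> borel_measurable N"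
proof (induction n)
  case 0
  have "stopped_exp r v 0 = (\<lambda>_. 1)" by auto
  then show ?case by simp
next
  case (Suc n)
  then have [measurable]: "stopped_exp r v n \<in> borel_measurable N" "class_sum r (Suc n) \<in> borel_measurable N"
    "Measurable.pred N (not_crossed r v n)"
    by (auto intro: pred_not_crossed)
  have "stopped_exp r v (Suc n) =
      (\<lambda>\<omega>. if not_crossed r v n \<omega> then exp (R * class_sum r (Suc n) \<omega>) else stopped_exp r v n \<omega>)"
    by auto
  then show ?case by simp
qed

lemma stopped_exp_Suc:
  "stopped_exp r v (Suc n) \<omega> =
     (if not_crossed r v n \<omega> \<and> Suc n mod Suc m = r
      then stopped_exp r v n \<omega> * exp (R * net_loss (Suc n) \<omega> / growth n \<omega>)
      else stopped_exp r v n \<omega>)"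
  by (auto simp: class_sum_Suc stopped_exp_not_crossed distrib_left exp_add)

lemma nn_integral_stopped_exp_Suc_le:
  "(\<integral>\<^sup>+\<omega>. stopped_exp r v (Suc n) \<omega> \<partial>M) \<le> (\<integral>\<^sup>+\<omega>. stopped_exp r v n \<omega> \<partial>M)"
proof (cases "Suc n mod Suc m = r")
  case False
  then show ?thesis by (simp only: stopped_exp_Suc) simp
next
  case True
  define W where "W \<omega> = (if not_crossed r v n \<omega> then stopped_exp r v n \<omega> else 0)" for \<omega>
  define D where "D \<omega> = (if not_crossed r v n \<omega> then 0 else stopped_exp r v n \<omega>)" for \<omega>
  define E where "E \<omega> = exp (R * net_loss (Suc n) \<omega> / growth n \<omega>)" for \<omega>
  have W: "W \<in> borel_measurable (info_before (Suc n))"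
  proof -
    have "class_sum r j \<in> borel_measurable (info_before (Suc n))" if "j \<le> n" for j
      using measurable_info_before(2)[of j "Suc n"] that True by simp
    then have [measurable]: "Measurable.pred (info_before (Suc n)) (not_crossed r v n)"
      "stopped_exp r v n \<in> borel_measurable (info_before (Suc n))"
      by (simp_all add: pred_not_crossed measurable_stopped_exp)
    show ?thesis unfolding W_def by measurable
  qed
  have [measurable]: "Measurable.pred M (not_crossed r v n)" "stopped_exp r v n \<in> borel_measurable M"
    "X (Suc n) \<in> borel_measurable M" "Y (Suc n) \<in> borel_measurable M"
    "I (Suc n) \<in> borel_measurable M" "growth n \<in> borel_measurable M"
    using X_rv Y_rv I_rv measurable_growth_class_sum_M
    by (simp_all add: pred_not_crossed measurable_stopped_exp)
  have [measurable]: "W \<in> borel_measurable M"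
    unfolding W_def by measurable
  have [measurable]: "D \<in> borel_measurable M"
    unfolding D_def by measurable
  have [measurable]: "E \<in> borel_measurable M"
    unfolding E_def net_loss_def by measurable
  have "stopped_exp r v (Suc n) \<omega> = W \<omega> * E \<omega> + D \<omega>" and nonneg: "W \<omega> \<ge> 0" "D \<omega> \<ge> 0" "E \<omega> \<ge> 0" for \<omega>
    using True stopped_exp_pos[of r v n \<omega>] by (simp_all only: stopped_exp_Suc) (simp_all add: W_def D_def E_def)
  then have "(\<integral>\<^sup>+\<omega>. stopped_exp r v (Suc n) \<omega> \<partial>M) = (\<integral>\<^sup>+\<omega>. ennreal (W \<omega> * E \<omega>) + ennreal (D \<omega>) \<partial>M)"
    by simp
  also have "\<dots> = (\<integral>\<^sup>+\<omega>. ennreal (W \<omega> * E \<omega>) \<partial>M) + (\<integral>\<^sup>+\<omega>. D \<omega> \<partial>M)"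
    by (rule nn_integral_add) measurable
  also have "\<dots> \<le> (\<integral>\<^sup>+\<omega>. W \<omega> \<partial>M) + (\<integral>\<^sup>+\<omega>. D \<omega> \<partial>M)"
    unfolding E_def using growth_ge_1 measurable_info_before(1)[of n "Suc n"]
    by (intro add_right_mono nn_integral_exp_net_loss_info_before_le W) auto
  also have "\<dots> = (\<integral>\<^sup>+\<omega>. ennreal (W \<omega>) + ennreal (D \<omega>) \<partial>M)"
    by (rule nn_integral_add[symmetric]) measurable
  also have "\<dots> = (\<integral>\<^sup>+\<omega>. stopped_exp r v n \<omega> \<partial>M)"
    by (intro nn_integral_cong) (simp add: W_def D_def)
  finally show ?thesis .
qed

lemma nn_integral_stopped_exp_le_1: "(\<integral>\<^sup>+\<omega>. stopped_exp r v n \<omega> \<partial>M) \<le> 1"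
proof (induction n)
  case 0
  then show ?case by (simp add: emeasure_space_1)
next
  case (Suc n)
  then show ?case using nn_integral_stopped_exp_Suc_le order_trans by blast
qed

lemma prob_crossed_le: "prob {\<omega> \<in> space M. \<not> not_crossed r v n \<omega>} \<le> exp (- R * v)"
proof -
  define E where "E = {\<omega> \<in> space M. \<not> not_crossed r v n \<omega>}"
  have [measurable]: "stopped_exp r v n \<in> borel_measurable M" "Measurable.pred M (not_crossed r v n)"
    using measurable_growth_class_sum_M(2) by (simp_all add: pred_not_crossed measurable_stopped_exp)
  have E: "E \<in> events" unfolding E_def by measurable
  have "ennreal (exp (R * v)) * emeasure M E = (\<integral>\<^sup>+\<omega>. ennreal (exp (R * v)) * indicator E \<omega> \<partial>M)"
    using E by (simp add: nn_integral_cmult_indicator)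
  also have "\<dots> \<le> (\<integral>\<^sup>+\<omega>. stopped_exp r v n \<omega> \<partial>M)"
    by (intro nn_integral_mono) (auto simp: E_def indicator_def stopped_exp_crossed intro: ennreal_leI)
  also have "\<dots> \<le> 1" by (rule nn_integral_stopped_exp_le_1)
  finally have "exp (R * v) * prob E \<le> 1"
    by (simp add: emeasure_eq_measure ennreal_mult[symmetric])
  then show ?thesis
    unfolding E_def by (simp add: exp_minus field_simps)
qed

lemma prob_class_sum_exceeds_le: "prob {\<omega> \<in> space M. \<exists>n. v < class_sum r n \<omega>} \<le> exp (- R * v)"
proof -
  let ?E = "\<lambda>n. {\<omega> \<in> space M. \<not> not_crossed r v n \<omega>}"
  have [measurable]: "Measurable.pred M (not_crossed r v n)" for n
    using measurable_growth_class_sum_M(2) by (simp add: pred_not_crossed)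
  have "incseq ?E"
    by (rule incseq_SucI) (auto simp: not_crossed_Suc)
  then have "(\<lambda>n. prob (?E n)) \<longlonglongrightarrow> prob (\<Union>n. ?E n)"
    by (intro finite_Lim_measure_incseq) auto
  then have "prob (\<Union>n. ?E n) \<le> exp (- R * v)"
    using prob_crossed_le by (intro LIMSEQ_le_const2) auto
  moreover have "(\<Union>n. ?E n) = {\<omega> \<in> space M. \<exists>n. v < class_sum r n \<omega>}"
    by (auto simp: not_crossed_def not_le)
  ultimately show ?thesis by simp
qed

lemma ruin_prob_le: "ruin_prob M X Y I u \<le> (real m + 1) * exp (- R * u / (real m + 1))"
proof -
  define v where "v = u / (real m + 1)"
  let ?E = "\<lambda>r. {\<omega> \<in> space M. \<exists>n. v < class_sum r n \<omega>}"
  have ruin_sub: "(\<Union>n\<in>{1..}. {\<omega> \<in> space M. surplus u X Y I n \<omega> < 0}) \<subseteq> (\<Union>r<Suc m. ?E r)"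
  proof safe
    fix \<omega> n assume \<omega>: "\<omega> \<in> space M" and ruin: "surplus u X Y I n \<omega> < 0"
    from ruin have "growth n \<omega> * (u - (\<Sum>r<Suc m. class_sum r n \<omega>)) < 0"
      unfolding surplus_eq[OF \<omega>] sum_eq_sum_class_sum .
    then have "u < (\<Sum>r<Suc m. class_sum r n \<omega>)"
      using growth_ge_1[OF \<omega>, of n] by (simp add: mult_less_0_iff del: sum.lessThan_Suc)
    moreover have "(\<Sum>r<Suc m. class_sum r n \<omega>) \<le> u" if "\<forall>r<Suc m. class_sum r n \<omega> \<le> v"
    proof -
      have "(\<Sum>r<Suc m. class_sum r n \<omega>) \<le> (\<Sum>r<Suc m. v)"
        using that by (intro sum_mono) auto
      also have "\<dots> = u" by (simp add: v_def field_simps del: sum.lessThan_Suc)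
      finally show ?thesis .
    qed
    ultimately have "\<not> (\<forall>r<Suc m. class_sum r n \<omega> \<le> v)" by fastforce
    then show "\<omega> \<in> (\<Union>r<Suc m. ?E r)" using \<omega> by (auto simp: not_le)
  qed
  have [measurable]: "class_sum r n \<in> borel_measurable M" for r n
    by (rule measurable_growth_class_sum_M)
  have "ruin_prob M X Y I u \<le> prob (\<Union>r<Suc m. ?E r)"
    unfolding ruin_prob_def by (intro finite_measure_mono[OF ruin_sub]) measurable
  also have "\<dots> \<le> (\<Sum>r<Suc m. prob (?E r))"
    using measurable_growth_class_sum_M by (intro finite_measure_subadditive_finite) auto
  also have "\<dots> \<le> (\<Sum>r<Suc m. exp (- R * v))"
    by (intro sum_mono prob_class_sum_exceeds_le)
  finally show ?thesis by (simp add: v_def add.commute)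
qed

end

theorem theorem3p1:
  fixes M :: "'a measure" and m :: nat
    and X Y I :: "nat \<Rightarrow> 'a \<Rightarrow> real" and R u :: real
  assumes P: "prob_space M"
    and X_rv: "\<And>n. n \<ge> 1 \<Longrightarrow> X n \<in> borel_measurable M"
    and Y_rv: "\<And>n. n \<ge> 1 \<Longrightarrow> Y n \<in> borel_measurable M"
    and I_rv: "\<And>n. n \<ge> 1 \<Longrightarrow> I n \<in> borel_measurable M"
    and X_nonneg: "\<And>n \<omega>. n \<ge> 1 \<Longrightarrow> \<omega> \<in> space M \<Longrightarrow> X n \<omega> \<ge> 0"
    and Y_nonneg: "\<And>n \<omega>. n \<ge> 1 \<Longrightarrow> \<omega> \<in> space M \<Longrightarrow> Y n \<omega> \<ge> 0"
    and I_nonneg: "\<And>n \<omega>. n \<ge> 1 \<Longrightarrow> \<omega> \<in> space M \<Longrightarrow> I n \<omega> \<ge> 0"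
    and X_int: "\<And>n. n \<ge> 1 \<Longrightarrow> integrable M (X n)"
    and Y_int: "\<And>n. n \<ge> 1 \<Longrightarrow> integrable M (Y n)"
    and I_int: "\<And>n. n \<ge> 1 \<Longrightarrow> integrable M (I n)"
    and X_id: "ident_distr M X"
    and Y_id: "ident_distr M Y"
    and I_id: "ident_distr M I"
    and X_mdep: "m_dependent M m X"
    and Y_mdep: "m_dependent M m Y"
    and I_indep: "prob_space.indep_vars M (\<lambda>_. borel) I {1..}"
    and XYI_indep: "prob_space.indep_sets M
          (\<lambda>j::nat. if j = 0 then gen_sigma M X {1..}
                     else if j = 1 then gen_sigma M Y {1..}
                     else gen_sigma M I {1..}) {0, 1, 2}"
    and R_pos: "R > 0"
    and R_lund: "(\<integral>\<^sup>+ \<omega>. ennreal (exp (R * (Y 1 \<omega> / (1 + I 1 \<omega>) - X 1 \<omega>))) \<partial>M) \<le> 1"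
    and u_large: "u > (real m + 1) * ln (real m + 1) / R"
  shows "ruin_prob M X Y I u \<le> (real m + 1) * exp (- R * u / (real m + 1))"
proof -
  interpret lundberg_model M m X Y I R
    using P X_rv Y_rv I_rv I_nonneg X_id Y_id I_id X_mdep Y_mdep I_indep XYI_indep R_pos R_lund
    by (simp add: lundberg_model_def lundberg_model_axioms_def risk_model_def risk_model_axioms_def)
  show ?thesis by (rule ruin_prob_le)
qed

end
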